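(* Let $X_n:\Omega\to\mathbb{R}$, $n\in\mathbb{N}$, and $X:\Omega\to\mathbb{R}$ be discrete random variables with $X_n\to X$ in distribution, and assume there is a discrete set $E\subset\mathbb{R}$ (a set without accumulation points in $\mathbb{R}$) containing the ranges of $X$ and of all $X_n$. Let $F_n$ and $F$ be the distribution functions of $X_n$ and $X$. For $(m,n)\in\mathbb{N}^2$ let $X_n^1,\ldots,X_n^m$ be i.i.d. with distribution function $F_n$, and let $F_{m,n}(x)=\frac1m\sum_{i=1}^m\mathbb{1}\{X_n^i\le x\}$ be their empirical distribution function. Then \[ \lim_{n\to\infty}\sup_{x\in\mathbb{R}}|F_{n,n}(x)-F(x)|=0\quad P\text{-a.s.} \] *)

theory Defs
  imports "HOL-Probability.Probability"
begin

definition emp_cdf :: "nat \<Rightarrow> (nat \<Rightarrow> 'a \<Rightarrow> real) \<Rightarrow> real \<Rightarrow> 'a \<Rightarrow> real" where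
  "emp_cdf m Y x w = (1 / real m) * (\<Sum>i=1..m. if Y i w \<le> x then 1 else 0)"

end

theory Submission
  imports Defs
begin

text \<open>
  Since \<open>E\<close> has no accumulation points, the distribution function of an \<open>E\<close>-valued variable
  is constant on every interval \<open>(a, b]\<close> missing \<open>E\<close>. Hence weak convergence already gives
  \<open>F\<^sub>n(t) \<rightarrow> F(t)\<close> at every \<open>t\<close>, and the sample points lie in \<open>E\<close> almost surely. At a fixed
  \<open>t\<close>, Hoeffding's inequality bounds the probability of an \<open>\<epsilon>\<close>-deviation of \<open>F\<^sub>n\<^sub>,\<^sub>n(t)\<close> from
  \<open>F\<^sub>n(t)\<close> by \<open>2 exp(-2 n \<epsilon>\<^sup>2)\<close>, which is summable, so by Borel-Cantelli
  \<open>F\<^sub>n\<^sub>,\<^sub>n(t) \<rightarrow> F(t)\<close> almost surely, simultaneously for the countably many \<open>t \<in> E \<union> \<int>\<close>.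
  Uniformity is then deterministic: outside a large integer interval \<open>[a, b]\<close> all functions
  are close to 0 or to 1, and inside it they are constant between the consecutive points of
  the finite set \<open>E \<inter> [a, b]\<close>.
\<close>

lemma finite_inter_Icc_if_no_limpt:
  fixes E :: "real set"
  assumes "\<And>x. \<not> x islimpt E"
  shows "finite (E \<inter> {a..b})"
  using finite_not_islimpt_in_compact[of "{a..b}" E] assms by (simp add: Int_commute)

lemma countable_if_no_limpt:
  fixes E :: "real set"
  assumes "\<And>x. \<not> x islimpt E"
  shows "countable E"
proof -
  have "E sparse_in UNIV"
    using assms unfolding sparse_in_def by blast
  then show ?thesis
    using sparse_imp_countable[OF open_UNIV] by simp
qed

lemma no_limpt_gap:
  assumes "\<not> t islimpt E"
  obtains e where "e > 0" "\<And>y. y \<in> E \<Longrightarrow> y \<noteq> t \<Longrightarrow> e \<le> dist y t"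
  using assms unfolding islimpt_approachable by (meson not_less)

lemma no_limpt_gap_right:
  fixes E :: "real set"
  assumes "\<not> t islimpt E"
  obtains s where "t < s" "{t<..s} \<inter> E = {}"
proof -
  obtain e where e: "e > 0" "\<And>y. y \<in> E \<Longrightarrow> y \<noteq> t \<Longrightarrow> e \<le> dist y t"
    using no_limpt_gap[OF assms] by blast
  have "{t<..t + e/2} \<inter> E = {}"
    using e by (force simp: dist_real_def)
  then show ?thesis
    using that[of "t + e/2"] e(1) by simp
qed

definition flat_off :: "real set \<Rightarrow> (real \<Rightarrow> real) \<Rightarrow> bool" where
  "flat_off E f \<longleftrightarrow> (\<forall>a b. a \<le> b \<longrightarrow> {a<..b} \<inter> E = {} \<longrightarrow> f b = f a)"

lemma flat_offD: "flat_off E f \<Longrightarrow> a \<le> b \<Longrightarrow> {a<..b} \<inter> E = {} \<Longrightarrow> f b = f a"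
  unfolding flat_off_def by blast

lemma (in prob_space) flat_off_cdf_distr:
  assumes "X \<in> borel_measurable M" "X ` space M \<subseteq> E"
  shows "flat_off E (cdf (distr M borel X))"
  unfolding flat_off_def
proof (intro allI impI)
  fix a b :: real assume "a \<le> b" "{a<..b} \<inter> E = {}"
  interpret D: real_distribution "distr M borel X" using assms(1) by simp
  show "cdf (distr M borel X) b = cdf (distr M borel X) a"
  proof (cases "a = b")
    case False
    then have "cdf (distr M borel X) b - cdf (distr M borel X) a = measure M (X -` {a<..b} \<inter> space M)"
      using \<open>a \<le> b\<close> assms(1) by (simp add: D.cdf_diff_eq measure_distr)
    also have "X -` {a<..b} \<inter> space M = {}"
      using assms(2) \<open>{a<..b} \<inter> E = {}\<close> by auto
    finally show ?thesis by simp
  qed simp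
qed

lemma (in real_distribution) measure_singleton_eq_0_if_flat_off:
  assumes "flat_off E (cdf M)" "{a<..s} \<inter> E = {}" "a < s"
  shows "measure M {s} = 0"
proof -
  have "measure M {s} \<le> measure M {a<..s}"
    using \<open>a < s\<close> by (intro finite_measure_mono) auto
  also have "\<dots> = cdf M s - cdf M a"
    using \<open>a < s\<close> by (simp add: cdf_diff_eq)
  also have "\<dots> = 0"
    using assms by (simp add: flat_offD)
  finally show ?thesis using measure_nonneg[of M "{s}"] by linarith
qed

lemma tendsto_cdf_if_weak_conv_flat_off:
  assumes "\<And>x. \<not> x islimpt E" "real_distribution \<mu>" "weak_conv_m \<mu>s \<mu>"
    and "\<And>n. flat_off E (cdf (\<mu>s n))" "flat_off E (cdf \<mu>)"
  shows "(\<lambda>n. cdf (\<mu>s n) t) \<longlonglongrightarrow> cdf \<mu> t"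
proof -
  interpret real_distribution \<mu> by fact
  obtain s where s: "t < s" "{t<..s} \<inter> E = {}"
    using no_limpt_gap_right[OF assms(1)] .
  \<comment> \<open>\<open>s\<close> is a continuity point of \<open>cdf \<mu>\<close>, and every cdf takes the same value at \<open>s\<close> as at \<open>t\<close>.\<close>
  have "isCont (cdf \<mu>) s"
    using measure_singleton_eq_0_if_flat_off[OF assms(5) s(2,1)] by (simp add: isCont_cdf)
  then have "(\<lambda>n. cdf (\<mu>s n) s) \<longlonglongrightarrow> cdf \<mu> s"
    using assms(3) by (simp add: weak_conv_m_def weak_conv_def)
  moreover have "cdf (\<mu>s n) s = cdf (\<mu>s n) t" for n
    using flat_offD[OF assms(4)] s by simp
  moreover have "cdf \<mu> s = cdf \<mu> t"
    using flat_offD[OF assms(5)] s by simp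
  ultimately show ?thesis by simp
qed

lemma (in prob_space) AE_in_if_flat_off_cdf:
  assumes "\<And>x. \<not> x islimpt E" "Z \<in> borel_measurable M" "flat_off E (cdf (distr M borel Z))"
  shows "AE w in M. Z w \<in> E"
proof -
  interpret D: real_distribution "distr M borel Z" using assms(2) by simp
  define C where "C = {(a, b). a \<in> \<rat> \<and> b \<in> \<rat> \<and> a < b \<and> {a<..b} \<inter> E = {}}"
  have "countable C"
    by (rule countable_subset[of _ "\<rat> \<times> \<rat>"]) (auto simp: C_def countable_rat)
  have "AE w in M. Z w \<notin> {a<..b}" if "(a, b) \<in> C" for a b
  proof -
    have "prob (Z -` {a<..b} \<inter> space M) = cdf (distr M borel Z) b - cdf (distr M borel Z) a"
      using that assms(2) by (simp add: C_def D.cdf_diff_eq measure_distr)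
    also have "\<dots> = 0"
      using that flat_offD[OF assms(3)] by (simp add: C_def)
    finally have "Z -` {a<..b} \<inter> space M \<in> null_sets M"
      using assms(2) by (auto simp: null_sets_def emeasure_eq_measure)
    then show ?thesis
      by (rule AE_I') auto
  qed
  then have "AE w in M. \<forall>(a, b)\<in>C. Z w \<notin> {a<..b}"
    using \<open>countable C\<close> by (simp add: AE_ball_countable split_beta')
  then show ?thesis
  proof (rule eventually_mono)
    fix w assume outside: "\<forall>(a, b)\<in>C. Z w \<notin> {a<..b}"
    show "Z w \<in> E"
    proof (rule ccontr)
      assume "Z w \<notin> E"
      obtain e where e: "e > 0" "\<And>y. y \<in> E \<Longrightarrow> y \<noteq> Z w \<Longrightarrow> e \<le> dist y (Z w)"
        using no_limpt_gap assms(1) by blast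
      obtain a where a: "a \<in> \<rat>" "Z w - e < a" "a < Z w"
        using Rats_dense_in_real[of "Z w - e" "Z w"] e(1) by auto
      obtain b where b: "b \<in> \<rat>" "Z w < b" "b < Z w + e"
        using Rats_dense_in_real[of "Z w" "Z w + e"] e(1) by auto
      have "{a<..b} \<inter> E = {}"
        using e(2) \<open>Z w \<notin> E\<close> a b by (force simp: dist_real_def)
      then have "(a, b) \<in> C"
        using a b by (simp add: C_def)
      then show False
        using outside a b by auto
    qed
  qed
qed

lemma borel_measurable_emp_cdf [measurable]:
  assumes "\<And>i. i \<in> {1..n} \<Longrightarrow> Z i \<in> borel_measurable M"
  shows "emp_cdf n Z t \<in> borel_measurable M"
  unfolding emp_cdf_def
proof (intro borel_measurable_times borel_measurable_const borel_measurable_sum)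
  fix i assume "i \<in> {1..n}"
  note [measurable] = assms[OF this]
  show "(\<lambda>w. if Z i w \<le> t then 1 else 0::real) \<in> borel_measurable M" by measurable
qed

lemma emp_cdf_mono: "mono (\<lambda>x. emp_cdf n Z x w)"
  unfolding emp_cdf_def by (intro monoI mult_left_mono sum_mono) auto

lemma emp_cdf_bounds: "emp_cdf n Z x w \<in> {0..1}"
proof -
  have "(\<Sum>i=1..n. if Z i w \<le> x then 1 else 0::real) \<le> real n"
    using sum_mono[of "{1..n}" "\<lambda>i. if Z i w \<le> x then 1 else 0::real" "\<lambda>_. 1"] by simp
  then show ?thesis
    unfolding emp_cdf_def by (cases "n = 0") (auto simp: field_simps intro: sum_nonneg)
qed

lemma flat_off_emp_cdf:
  assumes "\<And>i. i \<in> {1..n} \<Longrightarrow> Z i w \<in> E"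
  shows "flat_off E (\<lambda>x. emp_cdf n Z x w)"
  unfolding flat_off_def
proof (intro allI impI)
  fix a b :: real assume "a \<le> b" "{a<..b} \<inter> E = {}"
  then have "Z i w \<le> b \<longleftrightarrow> Z i w \<le> a" if "i \<in> {1..n}" for i
    using assms[OF that] by (metis disjoint_iff greaterThanAtMost_iff linorder_not_le order_trans)
  then show "emp_cdf n Z b w = emp_cdf n Z a w"
    unfolding emp_cdf_def by (intro arg_cong2[where f="(*)"] refl sum.cong) auto
qed

lemma (in prob_space) emp_cdf_deviation_prob_le:
  assumes "\<And>i. i \<in> {1..n} \<Longrightarrow> Z i \<in> borel_measurable M"
    and "indep_vars (\<lambda>_. borel) Z {1..n}"
    and "\<And>i. i \<in> {1..n} \<Longrightarrow> cdf (distr M borel (Z i)) t = p"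
    and "n > 0" "\<epsilon> \<ge> 0"
  shows "prob {w\<in>space M. \<epsilon> \<le> \<bar>emp_cdf n Z t w - p\<bar>} \<le> 2 * exp (-2 * real n * \<epsilon>\<^sup>2)"
proof -
  define V where "V i w = (if Z i w \<le> t then 1 else 0::real)" for i w
  have expectation_V: "expectation (V i) = p" if "i \<in> {1..n}" for i
  proof -
    note [measurable] = assms(1)[OF that]
    have "expectation (V i) = expectation (indicator (Z i -` {..t} \<inter> space M))"
      by (intro Bochner_Integration.integral_cong) (auto simp: V_def indicator_def)
    also have "\<dots> = prob (Z i -` {..t} \<inter> space M)"
      by simp
    also have "\<dots> = p"
      using assms(3)[OF that] by (simp add: cdf_def measure_distr)
    finally show ?thesis .
  qed
  have "indep_vars (\<lambda>_. borel) V {1..n}"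
    unfolding V_def by (rule indep_vars_compose2[OF assms(2)]) measurable
  then interpret Hoeffding_ineq M "{1..n}" V "\<lambda>_. 0" "\<lambda>_. 1" "real n * p"
    by unfold_locales (auto simp: V_def expectation_V)
  have deviation: "(\<Sum>i\<in>{1..n}. V i w) - real n * p = n * (emp_cdf n Z t w - p)" for w
    using assms(4) by (simp add: emp_cdf_def V_def field_simps)
  have "prob {w\<in>space M. \<epsilon> \<le> \<bar>emp_cdf n Z t w - p\<bar>}
          = prob {w\<in>space M. n * \<epsilon> \<le> \<bar>(\<Sum>i\<in>{1..n}. V i w) - real n * p\<bar>}"
    using assms(4) unfolding deviation by (simp add: abs_mult)
  also have "\<dots> \<le> 2 * exp (-2 * (n * \<epsilon>)\<^sup>2 / (\<Sum>i\<in>{1..n}. (1 - 0)\<^sup>2))"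
    using assms(4,5) by (intro Hoeffding_ineq_abs_ge) auto
  also have "-2 * (n * \<epsilon>)\<^sup>2 / (\<Sum>i\<in>{1..n}. (1 - 0::real)\<^sup>2) = -2 * real n * \<epsilon>\<^sup>2"
    using assms(4) by (simp add: power2_eq_square)
  finally show ?thesis .
qed

lemma (in prob_space) AE_tendsto_0_if_summable_tail_probs:
  fixes Z :: "nat \<Rightarrow> 'a \<Rightarrow> real"
  assumes [measurable]: "\<And>n. Z n \<in> borel_measurable M"
    and summable_tails: "\<And>\<epsilon>. \<epsilon> > 0 \<Longrightarrow> summable (\<lambda>n. prob {w\<in>space M. \<epsilon> \<le> \<bar>Z n w\<bar>})"
  shows "AE w in M. (\<lambda>n. Z n w) \<longlonglongrightarrow> 0"
proof -
  have eventually_small: "AE w in M. eventually (\<lambda>n. \<bar>Z n w\<bar> < \<epsilon>) sequentially"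
    if "\<epsilon> > 0" for \<epsilon>
  proof -
    have "{w\<in>space M. \<epsilon> \<le> \<bar>Z n w\<bar>} \<in> events" for n
      by measurable
    then have "AE w in M. eventually (\<lambda>n. w \<in> space M - {w\<in>space M. \<epsilon> \<le> \<bar>Z n w\<bar>}) sequentially"
      using that by (intro borel_cantelli_AE1 summable_tails) (auto simp: emeasure_eq_measure)
    then show ?thesis
      by (rule eventually_mono) (auto elim: eventually_mono)
  qed
  then have "AE w in M. \<forall>k::nat. eventually (\<lambda>n. \<bar>Z n w\<bar> < 1 / Suc k) sequentially"
    by (simp add: AE_all_countable)
  then show ?thesis
  proof (rule eventually_mono)
    fix w assume small: "\<forall>k::nat. eventually (\<lambda>n. \<bar>Z n w\<bar> < 1 / Suc k) sequentially"
    show "(\<lambda>n. Z n w) \<longlonglongrightarrow> 0"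
    proof (rule tendstoI)
      fix r :: real assume "r > 0"
      then obtain k :: nat where k: "1 / Suc k < r"
        by (rule nat_approx_posE)
      show "eventually (\<lambda>n. dist (Z n w) 0 < r) sequentially"
        using small[rule_format, of k] by (rule eventually_mono) (use k in auto)
    qed
  qed
qed

lemma (in prob_space) AE_emp_cdf_minus_cdf_tendsto_0:
  assumes "\<And>n i. i \<in> {1..n} \<Longrightarrow> Z n i \<in> borel_measurable M"
    and "\<And>n. indep_vars (\<lambda>_. borel) (Z n) {1..n}"
    and "\<And>n i. i \<in> {1..n} \<Longrightarrow> cdf (distr M borel (Z n i)) t = p n"
  shows "AE w in M. (\<lambda>n. emp_cdf n (Z n) t w - p n) \<longlonglongrightarrow> 0"
proof (rule AE_tendsto_0_if_summable_tail_probs)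
  show "(\<lambda>w. emp_cdf n (Z n) t w - p n) \<in> borel_measurable M" for n
    using assms(1) by simp
next
  fix \<epsilon> :: real assume "\<epsilon> > 0"
  define q where "q = exp (-2 * \<epsilon>\<^sup>2)"
  have "q < 1"
    using \<open>\<epsilon> > 0\<close> by (simp add: q_def)
  have tail_bound: "prob {w\<in>space M. \<epsilon> \<le> \<bar>emp_cdf n (Z n) t w - p n\<bar>} \<le> 2 * q ^ n" for n
  proof (cases "n = 0")
    case True
    have "prob {w\<in>space M. \<epsilon> \<le> \<bar>emp_cdf n (Z n) t w - p n\<bar>} \<le> 1"
      by (rule prob_le_1)
    also have "1 \<le> 2 * q ^ n"
      using True by simp
    finally show ?thesis .
  next
    case False
    then have "prob {w\<in>space M. \<epsilon> \<le> \<bar>emp_cdf n (Z n) t w - p n\<bar>} \<le> 2 * exp (-2 * real n * \<epsilon>\<^sup>2)"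
      using \<open>\<epsilon> > 0\<close> by (intro emp_cdf_deviation_prob_le assms) auto
    also have "exp (-2 * real n * \<epsilon>\<^sup>2) = q ^ n"
      unfolding q_def by (subst exp_of_nat_mult[symmetric]) (simp add: algebra_simps)
    finally show ?thesis .
  qed
  have "summable (\<lambda>n. 2 * q ^ n)"
    using \<open>q < 1\<close> by (intro summable_mult summable_geometric) (simp add: q_def)
  then show "summable (\<lambda>n. prob {w\<in>space M. \<epsilon> \<le> \<bar>emp_cdf n (Z n) t w - p n\<bar>})"
    by (rule summable_comparison_test') (simp add: tail_bound)
qed

lemma abs_diff_le_if_close_on_grid:
  fixes g F :: "real \<Rightarrow> real"
  assumes g: "mono g" "\<And>x. g x \<in> {0..1}" "flat_off E g"
    and F: "mono F" "\<And>x. F x \<in> {0..1}" "flat_off E F" "F a < \<delta>" "1 - \<delta> < F b"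
    and "finite (E \<inter> {a..b})"
    and close: "\<And>t. t \<in> insert a (insert b (E \<inter> {a..b})) \<Longrightarrow> \<bar>g t - F t\<bar> < \<delta>"
  shows "\<bar>g x - F x\<bar> \<le> 2 * \<delta>"
proof -
  consider "x < a" | "b \<le> x" | "a \<le> x" "x < b" by linarith
  then show ?thesis
  proof cases
    case 1
    then have "g x \<le> g a" "F x \<le> F a"
      using monoD[OF g(1), of x a] monoD[OF F(1), of x a] by simp_all
    moreover have "\<bar>g a - F a\<bar> < \<delta>"
      using close by simp
    ultimately show ?thesis
      using g(2)[of x] F(2)[of x] \<open>F a < \<delta>\<close> by (auto simp: abs_le_iff abs_less_iff)
  next
    case 2
    then have "g b \<le> g x" "F b \<le> F x"
      using monoD[OF g(1), of b x] monoD[OF F(1), of b x] by simp_all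
    moreover have "\<bar>g b - F b\<bar> < \<delta>"
      using close by simp
    ultimately show ?thesis
      using g(2)[of x] F(2)[of x] \<open>1 - \<delta> < F b\<close> by (auto simp: abs_le_iff abs_less_iff)
  next
    case 3
    define T where "T = insert a (E \<inter> {a..x})"
    have "finite T"
      by (rule finite_subset[of _ "insert a (E \<inter> {a..b})"]) (use 3 \<open>finite (E \<inter> {a..b})\<close> in \<open>auto simp: T_def\<close>)
    define e where "e = Max T"
    have "e \<in> T"
      unfolding e_def by (rule Max_in[OF \<open>finite T\<close>]) (simp add: T_def)
    have Max_T: "p \<le> e" if "p \<in> T" for p
      unfolding e_def by (rule Max_ge[OF \<open>finite T\<close> that])
    from \<open>e \<in> T\<close> have "a \<le> e" "e \<le> x"
      using 3 by (auto simp: T_def)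
    have "{e<..x} \<inter> E = {}"
    proof (rule ccontr)
      assume "{e<..x} \<inter> E \<noteq> {}"
      then obtain p where "p \<in> E" "e < p" "p \<le> x" by auto
      then have "p \<in> T" using \<open>a \<le> e\<close> by (simp add: T_def)
      then show False using Max_T \<open>e < p\<close> by fastforce
    qed
    then have "g x = g e" "F x = F e"
      using flat_offD[OF g(3)] flat_offD[OF F(3)] \<open>e \<le> x\<close> by auto
    moreover have "\<bar>g e - F e\<bar> < \<delta>"
      using close \<open>e \<in> T\<close> 3 by (auto simp: T_def)
    moreover have "\<delta> > 0"
      using close[of a] by simp
    ultimately show ?thesis by simp
  qed
qed

lemma tendsto_SUP_abs_diff_cdf_if_flat_off:
  fixes G :: "nat \<Rightarrow> real \<Rightarrow> real"
  assumes E: "\<And>x. \<not> x islimpt E"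
    and G: "\<And>n. mono (G n)" "\<And>n x. G n x \<in> {0..1}" "\<And>n. flat_off E (G n)"
    and "real_distribution \<mu>" "flat_off E (cdf \<mu>)"
    and conv: "\<And>t. t \<in> E \<union> \<int> \<Longrightarrow> (\<lambda>n. G n t) \<longlonglongrightarrow> cdf \<mu> t"
  shows "(\<lambda>n. SUP x. \<bar>G n x - cdf \<mu> x\<bar>) \<longlonglongrightarrow> 0"
proof (rule tendstoI)
  interpret real_distribution \<mu> by fact
  define F where "F = cdf \<mu>"
  have F: "mono F" "\<And>x. F x \<in> {0..1}" "flat_off E F" "(F \<longlongrightarrow> 0) at_bot" "(F \<longlongrightarrow> 1) at_top"
    using cdf_nondecreasing cdf_nonneg cdf_bounded_prob \<open>flat_off E (cdf \<mu>)\<close> cdf_lim_at_bot cdf_lim_at_top_prob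
    by (auto simp: F_def mono_def)
  fix \<epsilon> :: real assume "\<epsilon> > 0"
  define \<delta> where "\<delta> = \<epsilon> / 4"
  have "\<delta> > 0"
    using \<open>\<epsilon> > 0\<close> by (simp add: \<delta>_def)
  obtain N where N: "\<And>x. x \<le> N \<Longrightarrow> F x < \<delta>"
    using order_tendstoD(2)[OF F(4) \<open>\<delta> > 0\<close>] by (auto simp: eventually_at_bot_linorder)
  obtain N' where N': "\<And>x. N' \<le> x \<Longrightarrow> 1 - \<delta> < F x"
    using order_tendstoD(1)[OF F(5), of "1 - \<delta>"] \<open>\<delta> > 0\<close> by (auto simp: eventually_at_top_linorder)
  \<comment> \<open>Integer endpoints, so that convergence at them is among the hypotheses.\<close>
  define a b where "a = real_of_int \<lfloor>N\<rfloor>" and "b = real_of_int \<lceil>N'\<rceil>"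
  have "F a < \<delta>" "1 - \<delta> < F b"
    using N N' by (auto simp: a_def b_def)
  define T where "T = insert a (insert b (E \<inter> {a..b}))"
  have "finite T"
    unfolding T_def using finite_inter_Icc_if_no_limpt[OF E] by simp
  have "T \<subseteq> E \<union> \<int>"
    by (auto simp: T_def a_def b_def)
  then have "eventually (\<lambda>n. \<forall>t\<in>T. \<bar>G n t - F t\<bar> < \<delta>) sequentially"
    using tendstoD[OF conv \<open>\<delta> > 0\<close>] \<open>finite T\<close> unfolding F_def
    by (auto intro!: eventually_ball_finite simp: dist_real_def)
  then show "eventually (\<lambda>n. dist (SUP x. \<bar>G n x - cdf \<mu> x\<bar>) 0 < \<epsilon>) sequentially"
    unfolding F_def[symmetric]
  proof (rule eventually_mono)
    fix n assume "\<forall>t\<in>T. \<bar>G n t - F t\<bar> < \<delta>"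
    then have bound: "\<bar>G n x - F x\<bar> \<le> 2 * \<delta>" for x
      using abs_diff_le_if_close_on_grid[OF G F(1-3) \<open>F a < \<delta>\<close> \<open>1 - \<delta> < F b\<close>
          finite_inter_Icc_if_no_limpt[OF E]]
      unfolding T_def by blast
    have "(SUP x. \<bar>G n x - F x\<bar>) \<le> 2 * \<delta>"
      using bound by (intro cSUP_least) auto
    moreover have "0 \<le> (SUP x. \<bar>G n x - F x\<bar>)"
      using bound by (intro cSUP_upper2[of _ _ 0] bdd_aboveI2) auto
    ultimately show "dist (SUP x. \<bar>G n x - F x\<bar>) 0 < \<epsilon>"
      using \<open>\<epsilon> > 0\<close> by (simp add: \<delta>_def dist_real_def)
  qed
qed

theorem mainTheorem5:
  fixes M :: "'a measure"
    and X :: "nat \<Rightarrow> 'a \<Rightarrow> real" and Xl :: "'a \<Rightarrow> real"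
    and E :: "real set"
    and Y :: "nat \<Rightarrow> nat \<Rightarrow> nat \<Rightarrow> 'a \<Rightarrow> real"
  assumes "prob_space M"
    and "\<And>n. X n \<in> borel_measurable M"
    and "Xl \<in> borel_measurable M"
    and "\<And>x. \<not> x islimpt E"
    and "\<And>n. X n ` space M \<subseteq> E"
    and "Xl ` space M \<subseteq> E"
    and "weak_conv_m (\<lambda>n. distr M borel (X n)) (distr M borel Xl)"
    and "\<And>m n i. i \<in> {1..m} \<Longrightarrow> Y m n i \<in> borel_measurable M"
    and "\<And>m n. prob_space.indep_vars M (\<lambda>_. borel) (Y m n) {1..m}"
    and "\<And>m n i. i \<in> {1..m} \<Longrightarrow>
           cdf (distr M borel (Y m n i)) = cdf (distr M borel (X n))"
  shows "AE w in M.
           (\<lambda>n. SUP x::real. \<bar>emp_cdf n (Y n n) x w - cdf (distr M borel Xl) x\<bar>)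
             \<longlonglongrightarrow> 0"
proof -
  interpret prob_space M by fact
  have flat_X: "flat_off E (cdf (distr M borel (X n)))" for n
    using flat_off_cdf_distr assms(2,5) by blast
  have flat_Xl: "flat_off E (cdf (distr M borel Xl))"
    using flat_off_cdf_distr assms(3,6) by blast
  have pointwise: "AE w in M. (\<lambda>n. emp_cdf n (Y n n) t w) \<longlonglongrightarrow> cdf (distr M borel Xl) t" for t
  proof -
    have cdf_conv: "(\<lambda>n. cdf (distr M borel (X n)) t) \<longlonglongrightarrow> cdf (distr M borel Xl) t"
      using assms(3,4,7) flat_X flat_Xl by (intro tendsto_cdf_if_weak_conv_flat_off) auto
    have "AE w in M. (\<lambda>n. emp_cdf n (Y n n) t w - cdf (distr M borel (X n)) t) \<longlonglongrightarrow> 0"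
      using assms(8-10) by (intro AE_emp_cdf_minus_cdf_tendsto_0) auto
    then show ?thesis
      by (rule eventually_mono) (drule tendsto_add[OF _ cdf_conv], simp)
  qed
  have "AE w in M. Y n n i w \<in> E" if "i \<in> {1..n}" for n i
    using assms(4,8,10) flat_X that by (intro AE_in_if_flat_off_cdf) auto
  then have "AE w in M. \<forall>n. \<forall>i\<in>{1..n}. Y n n i w \<in> E"
    by (simp add: AE_all_countable AE_ball_countable)
  moreover have "AE w in M. \<forall>t\<in>E \<union> \<int>. (\<lambda>n. emp_cdf n (Y n n) t w) \<longlonglongrightarrow> cdf (distr M borel Xl) t"
    by (rule AE_ball_countable'[OF pointwise]) (simp add: countable_if_no_limpt[OF assms(4)] countable_int)
  ultimately show ?thesis
  proof eventually_elim
    case (elim w)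
    then have "flat_off E (\<lambda>x. emp_cdf n (Y n n) x w)" for n
      by (intro flat_off_emp_cdf) auto
    then show ?case
      using elim(2) assms(3) flat_Xl
      by (intro tendsto_SUP_abs_diff_cdf_if_flat_off[OF assms(4) emp_cdf_mono emp_cdf_bounds]) auto
  qed
qed

end
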